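(* Let $G$ be a connected threshold graph of order $n \ge 4$ and size $m$ with $n-1 < m < \binom{n}{2}$, with generating sequence $a_1a_2\cdots a_n$, $c$ type 1 vertices, $z$ type 0 vertices, backwards zero position sequence $(b_1,\ldots,b_z)$, and numbers $F_p$ ($p\in\mathbb{N}_0$) and $\mathrm{LW}_k$ ($k \in \mathbb{N}_0$) as defined in the context. Then the sequence $(\mathrm{LW}_k)_{k\in\mathbb{N}_0}$ satisfies \[ \mathrm{LW}_0 = 1, \qquad \mathrm{LW}_k = c\,\mathrm{LW}_{k-1} + \sum_{r=0}^{k-3} \mathrm{LW}_r \sum_{q\in\mathbb{N}_0} \binom{k-3-r-q}{q} F_{q+1} \qquad (k\in\mathbb{N}). \]
   Context: A threshold graph is a simple graph whose vertices can be ordered $v_1,\ldots,v_n$ so that for each $2\le i\le n$, $v_i$ is either adjacent to all of $v_1,\ldots,v_{i-1}$ (then $a_i=1$) or to none of them (then $a_i=0$); $a_1a_2\cdots a_n$ is the generating sequence, where by convention $a_1=1$. Vertex $v_i$ is of type 1 if $a_i=1$ and of type 0 if $a_i=0$; $c$ and $z$ denote the numbers of type 1 and type 0 vertices, so $c+z=n$ (here $c\ge 3$, $z \ge 1$). The backwards zero position sequence $(b_1,\ldots,b_z)$ is defined by letting $b_i$ be the number of type 1 vertices appearing after the $i$-th type 0 vertex in the order $v_1,\ldots,v_n$. A lazy walk of length $k\in\mathbb{N}_0$ is a sequence $u_0u_1\cdots u_k$ of vertices such that for each $1\le i\le k$, $u_i=u_{i-1}$ or $u_i$ is adjacent to $u_{i-1}$.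 For $k\in\mathbb{N}$, $\mathrm{LW}_k$ is the number of lazy walks of length $k-1$ in $G$ whose first and last vertices are both type 1 vertices, and $\mathrm{LW}_0=1$. Define $F_0=c$ and, for $p\ge 1$, \[F_p=\sum_{i_1,\ldots,i_p=1}^{z} b_{i_1}\min\{b_{i_1},b_{i_2}\}\min\{b_{i_2},b_{i_3}\}\cdots\min\{b_{i_{p-1}},b_{i_p}\}\,b_{i_p}\] (so $F_1=\sum_{i=1}^z b_i^2$). Binomial coefficients $\binom{a}{q}$ with integer $a$ and $q\in\mathbb{N}_0$ are taken to be $0$ whenever $a<q$. *)

theory Defs
  imports Main
begin

definition simple_graph :: "'a set \<Rightarrow> ('a \<Rightarrow> 'a \<Rightarrow> bool) \<Rightarrow> bool" where
  "simple_graph V E \<longleftrightarrow> finite V \<and>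
     (\<forall>x y. E x y \<longrightarrow> x \<in> V \<and> y \<in> V \<and> x \<noteq> y \<and> E y x)"

definition threshold_order ::
  "'a set \<Rightarrow> ('a \<Rightarrow> 'a \<Rightarrow> bool) \<Rightarrow> nat \<Rightarrow> (nat \<Rightarrow> 'a) \<Rightarrow> (nat \<Rightarrow> bool) \<Rightarrow> bool" where
  "threshold_order V E n v a \<longleftrightarrow> bij_betw v {1..n} V \<and> a 1 \<and>
     (\<forall>i\<in>{2..n}. \<forall>j\<in>{1..<i}. E (v i) (v j) = a i)"

definition graph_connected :: "'a set \<Rightarrow> ('a \<Rightarrow> 'a \<Rightarrow> bool) \<Rightarrow> bool" where
  "graph_connected V E \<longleftrightarrow> (\<forall>x\<in>V. \<forall>y\<in>V. E\<^sup>*\<^sup>* x y)"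

definition graph_size :: "('a \<Rightarrow> 'a \<Rightarrow> bool) \<Rightarrow> nat" where
  "graph_size E = card {{x, y} | x y. E x y}"

definition type1 :: "nat \<Rightarrow> (nat \<Rightarrow> 'a) \<Rightarrow> (nat \<Rightarrow> bool) \<Rightarrow> 'a \<Rightarrow> bool" where
  "type1 n v a u \<longleftrightarrow> (\<exists>i\<in>{1..n}. v i = u \<and> a i)"

definition num_type1 :: "nat \<Rightarrow> (nat \<Rightarrow> bool) \<Rightarrow> nat" where
  "num_type1 n a = card {i\<in>{1..n}. a i}"

definition num_type0 :: "nat \<Rightarrow> (nat \<Rightarrow> bool) \<Rightarrow> nat" where
  "num_type0 n a = card {i\<in>{1..n}. \<not> a i}"

text \<open>Positions of the type 0 vertices, in increasing order, and the backwards
zero position sequence (0-indexed list: entry i is b_(i+1)).\<close>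
definition zero_positions :: "nat \<Rightarrow> (nat \<Rightarrow> bool) \<Rightarrow> nat list" where
  "zero_positions n a = filter (\<lambda>i. \<not> a i) [1..<Suc n]"

definition bzps :: "nat \<Rightarrow> (nat \<Rightarrow> bool) \<Rightarrow> nat list" where
  "bzps n a = map (\<lambda>p. card {j. p < j \<and> j \<le> n \<and> a j}) (zero_positions n a)"

text \<open>F_0 = c, and for p >= 1 the sum over all index tuples (i_1,...,i_p) in
{1..z}^p (represented as lists over {0..<z}).\<close>
definition Fnum :: "nat \<Rightarrow> (nat \<Rightarrow> bool) \<Rightarrow> nat \<Rightarrow> nat" where
  "Fnum n a p = (if p = 0 then num_type1 n a else
     (let b = bzps n a; z = num_type0 n a in
      \<Sum>is\<in>{is. length is = p \<and> set is \<subseteq> {0..<z}}.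
         b ! (hd is) * (\<Prod>j<p - 1. min (b ! (is ! j)) (b ! (is ! Suc j))) * b ! (last is)))"

text \<open>Lazy walks u_0 ... u_(k-1) of length k-1 (k vertices) whose first and last vertices
are of type 1.\<close>
definition lazy_walks_11 ::
  "'a set \<Rightarrow> ('a \<Rightarrow> 'a \<Rightarrow> bool) \<Rightarrow> ('a \<Rightarrow> bool) \<Rightarrow> nat \<Rightarrow> 'a list set" where
  "lazy_walks_11 V E T k = {ws. length ws = k \<and> set ws \<subseteq> V \<and>
     (\<forall>i. Suc i < k \<longrightarrow> ws ! Suc i = ws ! i \<or> E (ws ! i) (ws ! Suc i)) \<and>
     T (hd ws) \<and> T (last ws)}"

definition LW :: "'a set \<Rightarrow> ('a \<Rightarrow> 'a \<Rightarrow> bool) \<Rightarrow> nat \<Rightarrow> (nat \<Rightarrow> 'a) \<Rightarrow> (nat \<Rightarrow> bool) \<Rightarrow> nat \<Rightarrow> nat" where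
  "LW V E n v a k = (if k = 0 then 1 else card (lazy_walks_11 V E (type1 n v a) k))"

end

theory Submission
  imports Defs
begin

(* Index the vertices by their positions 1..n.  Distinct positions i and j are adjacent iff
   a (max i j), so a lazy step from a type 1 position may go to any type 1 position or to an
   earlier type 0 one, and a lazy step from a type 0 position p stays at p or goes to a later
   type 1 position.  Let w k j count the lazy walks with k vertices from a type 1 vertex to
   position j.  Summing over type 1 endpoints gives LW (k+1) = c LW k + sum_p b_p w k p, and
   for a type 0 position p one gets the second order recurrence
     w (k+2) p = w (k+1) p + b_p LW k + (M (w k)) p,   M p p' = min b_p b_p'.
   Its solution is the convolution w k p = sum_r LW r g (k-2-r) p, where
   g m = sum_q C(m-q, q) M^q b is a Fibonacci polynomial in M applied to b, and
   F (q+1) = b^T M^q b is the sum over index sequences in the definition of F. *)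

definition lazy_walks_ending_at ::
  "'a set \<Rightarrow> ('a \<Rightarrow> 'a \<Rightarrow> bool) \<Rightarrow> ('a \<Rightarrow> bool) \<Rightarrow> nat \<Rightarrow> 'a \<Rightarrow> 'a list set" where
  "lazy_walks_ending_at V E T k y = {ws. length ws = k \<and> ws \<noteq> [] \<and> set ws \<subseteq> V \<and>
     successively (\<lambda>x x'. x' = x \<or> E x x') ws \<and> T (hd ws) \<and> last ws = y}"

lemma finite_lazy_walks_ending_at: "finite V \<Longrightarrow> finite (lazy_walks_ending_at V E T k y)"
  by (rule finite_subset[OF _ finite_lists_length_eq[of V k]])
    (auto simp: lazy_walks_ending_at_def)

lemma lazy_walks_11_eq_UN:
  "k \<noteq> 0 \<Longrightarrow> lazy_walks_11 V E T k = (\<Union>y\<in>{y\<in>V. T y}. lazy_walks_ending_at V E T k y)"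
  by (fastforce simp: lazy_walks_11_def lazy_walks_ending_at_def successively_conv_nth)

lemma card_lazy_walks_11:
  assumes "finite V" "k \<noteq> 0"
  shows "card (lazy_walks_11 V E T k) = (\<Sum>y | y \<in> V \<and> T y. card (lazy_walks_ending_at V E T k y))"
  unfolding lazy_walks_11_eq_UN[OF assms(2)] using assms(1)
  by (intro card_UN_disjoint ballI finite_lazy_walks_ending_at)
    (auto simp: lazy_walks_ending_at_def)

lemma lazy_walks_ending_at_0 [simp]: "lazy_walks_ending_at V E T 0 y = {}"
  by (simp add: lazy_walks_ending_at_def)

lemma lazy_walks_ending_at_1:
  "lazy_walks_ending_at V E T (Suc 0) y = (if y \<in> V \<and> T y then {[y]} else {})"
  by (auto simp: lazy_walks_ending_at_def length_Suc_conv)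

lemma lazy_walks_ending_at_Suc_Suc:
  assumes "y \<in> V"
  shows "lazy_walks_ending_at V E T (Suc (Suc m)) y =
    (\<lambda>ws. ws @ [y]) ` (\<Union>x\<in>{x\<in>V. x = y \<or> E x y}. lazy_walks_ending_at V E T (Suc m) x)"
proof (intro set_eqI iffI)
  fix ws assume ws: "ws \<in> lazy_walks_ending_at V E T (Suc (Suc m)) y"
  then obtain us where us: "ws = us @ [y]" "length us = Suc m"
    by (cases ws rule: rev_cases) (auto simp: lazy_walks_ending_at_def)
  moreover from us have "us \<noteq> []"
    by auto
  ultimately have "us \<in> lazy_walks_ending_at V E T (Suc m) (last us)"
    "last us \<in> V" "last us = y \<or> E (last us) y"
    using ws by (auto simp: lazy_walks_ending_at_def successively_append_iff hd_append)
  with us show "ws \<in> (\<lambda>ws. ws @ [y]) ` (\<Union>x\<in>{x\<in>V. x = y \<or> E x y}. lazy_walks_ending_at V E T (Suc m) x)"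
    by blast
next
  fix ws assume "ws \<in> (\<lambda>ws. ws @ [y]) ` (\<Union>x\<in>{x\<in>V. x = y \<or> E x y}. lazy_walks_ending_at V E T (Suc m) x)"
  then show "ws \<in> lazy_walks_ending_at V E T (Suc (Suc m)) y"
    using assms by (auto simp: lazy_walks_ending_at_def successively_append_iff)
qed

lemma card_lazy_walks_ending_at_Suc_Suc:
  assumes "finite V" "y \<in> V"
  shows "card (lazy_walks_ending_at V E T (Suc (Suc m)) y) =
    (\<Sum>x | x \<in> V \<and> (x = y \<or> E x y). card (lazy_walks_ending_at V E T (Suc m) x))"
proof -
  have "card (lazy_walks_ending_at V E T (Suc (Suc m)) y) =
      card (\<Union>x\<in>{x\<in>V. x = y \<or> E x y}. lazy_walks_ending_at V E T (Suc m) x)"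
    unfolding lazy_walks_ending_at_Suc_Suc[OF assms(2)] by (rule card_image) (simp add: inj_on_def)
  also have "\<dots> = (\<Sum>x | x \<in> V \<and> (x = y \<or> E x y). card (lazy_walks_ending_at V E T (Suc m) x))"
    using assms(1) by (intro card_UN_disjoint ballI finite_lazy_walks_ending_at)
      (auto simp: lazy_walks_ending_at_def)
  finally show ?thesis .
qed

definition kernel_apply :: "'b set \<Rightarrow> ('b \<Rightarrow> 'b \<Rightarrow> 'a::comm_semiring_0) \<Rightarrow> ('b \<Rightarrow> 'a) \<Rightarrow> 'b \<Rightarrow> 'a" where
  "kernel_apply A K f x = (\<Sum>y\<in>A. K x y * f y)"

lemma kernel_apply_cong:
  "(\<And>y. y \<in> A \<Longrightarrow> f y = g y) \<Longrightarrow> kernel_apply A K f x = kernel_apply A K g x"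
  by (simp add: kernel_apply_def)

lemma kernel_apply_sum:
  "kernel_apply A K (\<lambda>y. \<Sum>r\<in>R. c r * f r y) x = (\<Sum>r\<in>R. c r * kernel_apply A K (f r) x)"
  unfolding kernel_apply_def
  by (simp add: sum_distrib_left sum.swap[of _ R] mult.left_commute)

lemma kernel_power_reindex:
  assumes "bij_betw h A B"
    and "\<And>x y. x \<in> A \<Longrightarrow> y \<in> A \<Longrightarrow> K' x y = K (h x) (h y)"
    and "\<And>x. x \<in> A \<Longrightarrow> f' x = f (h x)"
    and "x \<in> A"
  shows "(kernel_apply A K' ^^ q) f' x = (kernel_apply B K ^^ q) f (h x)"
  using assms(4)
proof (induction q arbitrary: x)
  case 0
  then show ?case by (simp add: assms(3))
next
  case (Suc q)
  have "(kernel_apply A K' ^^ Suc q) f' x = (\<Sum>y\<in>A. K' x y * (kernel_apply A K' ^^ q) f' y)"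
    by (simp add: kernel_apply_def)
  also have "\<dots> = (\<Sum>y\<in>A. K (h x) (h y) * (kernel_apply B K ^^ q) f (h y))"
    using Suc by (intro sum.cong refl) (simp add: assms(2))
  also have "\<dots> = (kernel_apply B K ^^ Suc q) f (h x)"
    using sum.reindex_bij_betw[OF assms(1), of "\<lambda>y. K (h x) y * (kernel_apply B K ^^ q) f y"]
    by (simp add: kernel_apply_def)
  finally show ?case .
qed

lemma sum_lists_path_product:
  fixes u f :: "'b \<Rightarrow> 'a::comm_semiring_1"
  shows "(\<Sum>l | length l = Suc p \<and> set l \<subseteq> A. u (hd l) * (\<Prod>j<p. K (l!j) (l!Suc j)) * f (last l)) =
    (\<Sum>x\<in>A. u x * (kernel_apply A K ^^ p) f x)"
proof (induction p arbitrary: u)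
  case 0
  have "{l. length l = Suc 0 \<and> set l \<subseteq> A} = (\<lambda>x. [x]) ` A"
    by (auto simp: length_Suc_conv)
  then show ?case
    by (simp add: sum.reindex inj_on_def)
next
  case (Suc p)
  let ?L = "{l. length l = Suc p \<and> set l \<subseteq> A}"
  have lists: "{l. length l = Suc (Suc p) \<and> set l \<subseteq> A} = (\<lambda>(l, x). x # l) ` (?L \<times> A)"
    using lists_length_Suc_eq[of A "Suc p"] by (simp add: conj_commute)
  have "(\<Sum>l | length l = Suc (Suc p) \<and> set l \<subseteq> A.
          u (hd l) * (\<Prod>j<Suc p. K (l!j) (l!Suc j)) * f (last l)) =
      (\<Sum>x\<in>A. \<Sum>l\<in>?L. u x * (\<Prod>j<Suc p. K ((x # l)!j) ((x # l)!Suc j)) * f (last (x # l)))"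
    unfolding lists sum.reindex[OF inj_split_Cons] sum.cartesian_product'
    by (simp only: comp_def prod.case list.sel(1)) (rule sum.swap)
  also have "\<dots> = (\<Sum>x\<in>A. \<Sum>l\<in>?L. (u x * K x (hd l)) * (\<Prod>j<p. K (l!j) (l!Suc j)) * f (last l))"
    by (intro sum.cong refl)
      (auto simp: prod.lessThan_Suc_shift hd_conv_nth mult_ac simp del: prod.lessThan_Suc)
  also have "\<dots> = (\<Sum>x\<in>A. \<Sum>y\<in>A. u x * K x y * (kernel_apply A K ^^ p) f y)"
    by (intro sum.cong refl Suc.IH)
  also have "\<dots> = (\<Sum>x\<in>A. u x * (kernel_apply A K ^^ Suc p) f x)"
    by (simp add: kernel_apply_def sum_distrib_left mult.assoc)
  finally show ?case .
qed

(* With h q = x ^ q this is the Fibonacci polynomial of index m + 1 in x. *)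
definition fibonacci_binomial_sum :: "(nat \<Rightarrow> 'a::comm_semiring_1) \<Rightarrow> nat \<Rightarrow> 'a" where
  "fibonacci_binomial_sum h m = (\<Sum>q\<le>m. of_nat ((m - q) choose q) * h q)"

lemma fibonacci_binomial_sum_0 [simp]: "fibonacci_binomial_sum h 0 = h 0"
  by (simp add: fibonacci_binomial_sum_def)

lemma fibonacci_binomial_sum_1 [simp]: "fibonacci_binomial_sum h (Suc 0) = h 0"
  by (simp add: fibonacci_binomial_sum_def)

lemma fibonacci_binomial_sum_Suc_Suc:
  "fibonacci_binomial_sum h (Suc (Suc m)) =
    fibonacci_binomial_sum h (Suc m) + fibonacci_binomial_sum (\<lambda>q. h (Suc q)) m"
proof -
  have shift: "fibonacci_binomial_sum h (Suc l) =
      h 0 + (\<Sum>q\<le>l. of_nat ((l - q) choose Suc q) * h (Suc q))" for l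
    unfolding fibonacci_binomial_sum_def by (subst sum.atMost_Suc_shift) simp
  have pascal: "(Suc m - q) choose Suc q = ((m - q) choose Suc q) + ((m - q) choose q)"
    if "q \<le> m" for q
    using that by (simp add: Suc_diff_le)
  have "fibonacci_binomial_sum h (Suc (Suc m)) =
      h 0 + (\<Sum>q\<le>Suc m. of_nat ((Suc m - q) choose Suc q) * h (Suc q))"
    by (rule shift)
  also have "\<dots> = h 0 + (\<Sum>q\<le>m. of_nat ((m - q) choose Suc q) * h (Suc q)) +
      (\<Sum>q\<le>m. of_nat ((m - q) choose q) * h (Suc q))"
    by (simp add: pascal sum.distrib distrib_right add.assoc)
  also have "\<dots> = fibonacci_binomial_sum h (Suc m) + fibonacci_binomial_sum (\<lambda>q. h (Suc q)) m"
    unfolding shift[of m] fibonacci_binomial_sum_def[of "\<lambda>q. h (Suc q)"] ..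
  finally show ?thesis .
qed

lemma sum_sum_restrict_swap:
  assumes "finite A" "finite B"
  shows "(\<Sum>x\<in>A. \<Sum>y | y \<in> B \<and> R x y. f y) = (\<Sum>y\<in>B. of_nat (card {x \<in> A. R x y}) * f y)"
  using sum.swap_restrict[OF assms, of "\<lambda>x y. f y" R] by simp

definition type1_positions :: "nat \<Rightarrow> (nat \<Rightarrow> bool) \<Rightarrow> nat set" where
  "type1_positions n a = {j \<in> {1..n}. a j}"

definition type0_positions :: "nat \<Rightarrow> (nat \<Rightarrow> bool) \<Rightarrow> nat set" where
  "type0_positions n a = {j \<in> {1..n}. \<not> a j}"

definition ones_after :: "nat \<Rightarrow> (nat \<Rightarrow> bool) \<Rightarrow> nat \<Rightarrow> nat" where
  "ones_after n a p = card {j \<in> type1_positions n a. p < j}"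

lemma finite_type1_positions [simp]: "finite (type1_positions n a)"
  by (simp add: type1_positions_def)

lemma finite_type0_positions [simp]: "finite (type0_positions n a)"
  by (simp add: type0_positions_def)

lemma card_type1_positions: "card (type1_positions n a) = num_type1 n a"
  by (simp add: type1_positions_def num_type1_def)

lemma ones_after_antimono: "p \<le> p' \<Longrightarrow> ones_after n a p' \<le> ones_after n a p"
  unfolding ones_after_def by (intro card_mono) auto

lemma card_ones_after_both:
  "card {j \<in> type1_positions n a. p < j \<and> p' < j} = min (ones_after n a p) (ones_after n a p')"
proof -
  have "card {j \<in> type1_positions n a. p < j \<and> p' < j} = ones_after n a (max p p')"
    unfolding ones_after_def by (rule arg_cong[where f = card]) auto
  then show ?thesis
    using ones_after_antimono[of p p' n a] ones_after_antimono[of p' p n a]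
    by (auto simp: max_def min_def intro: le_antisym)
qed

locale threshold_sequence =
  fixes n :: nat and a :: "nat \<Rightarrow> bool"
begin

(* b and the matrix M are indexed by the type 0 positions themselves, not by 1..z. *)
abbreviation "T1 \<equiv> type1_positions n a"
abbreviation "T0 \<equiv> type0_positions n a"
abbreviation "b \<equiv> ones_after n a"
abbreviation "M \<equiv> kernel_apply T0 (\<lambda>p p'. min (b p) (b p'))"

lemma Fnum_Suc: "Fnum n a (Suc q) = (\<Sum>p\<in>T0. b p * (M ^^ q) b p)"
proof -
  define zs where "zs = zero_positions n a"
  define z where "z = num_type0 n a"
  define bs where "bs = bzps n a"
  have "distinct zs" and set_zs: "set zs = T0"
    by (auto simp: zs_def zero_positions_def type0_positions_def)
  then have length_zs: "length zs = z"
    by (simp add: z_def num_type0_def type0_positions_def distinct_card[symmetric])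
  have bij: "bij_betw ((!) zs) {0..<z} T0"
    using \<open>distinct zs\<close> by (intro bij_betw_nth) (auto simp: length_zs set_zs)
  have bs_nth: "bs ! i = b (zs ! i)" if "i \<in> {0..<z}" for i
  proof -
    have "{j. zs ! i < j \<and> j \<le> n \<and> a j} = {j \<in> T1. zs ! i < j}"
      by (auto simp: type1_positions_def)
    then show ?thesis
      using that by (simp add: bs_def bzps_def zs_def[symmetric] length_zs ones_after_def)
  qed
  have power: "(kernel_apply {0..<z} (\<lambda>i j. min (bs ! i) (bs ! j)) ^^ q) ((!) bs) i =
      (M ^^ q) b (zs ! i)"
    if "i \<in> {0..<z}" for i
    by (rule kernel_power_reindex[OF bij _ _ that]) (simp_all add: bs_nth)
  have "Fnum n a (Suc q) = (\<Sum>l | length l = Suc q \<and> set l \<subseteq> {0..<z}.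
      bs ! hd l * (\<Prod>j<q. min (bs ! (l ! j)) (bs ! (l ! Suc j))) * bs ! last l)"
    by (simp add: Fnum_def Let_def z_def bs_def)
  also have "\<dots> = (\<Sum>i\<in>{0..<z}.
      bs ! i * (kernel_apply {0..<z} (\<lambda>i j. min (bs ! i) (bs ! j)) ^^ q) ((!) bs) i)"
    by (rule sum_lists_path_product)
  also have "\<dots> = (\<Sum>i\<in>{0..<z}. b (zs ! i) * (M ^^ q) b (zs ! i))"
    by (intro sum.cong refl) (simp add: bs_nth power)
  also have "\<dots> = (\<Sum>p\<in>T0. b p * (M ^^ q) b p)"
    by (rule sum.reindex_bij_betw[OF bij])
  finally show ?thesis .
qed

definition fibonacci_weight :: "nat \<Rightarrow> nat \<Rightarrow> nat" where
  "fibonacci_weight m p = fibonacci_binomial_sum (\<lambda>q. (M ^^ q) b p) m"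

lemma fibonacci_weight_0: "fibonacci_weight 0 p = b p"
  and fibonacci_weight_1: "fibonacci_weight (Suc 0) p = b p"
  by (simp_all add: fibonacci_weight_def)

lemma fibonacci_weight_Suc_Suc:
  "fibonacci_weight (Suc (Suc m)) p = fibonacci_weight (Suc m) p + M (fibonacci_weight m) p"
proof -
  have "M (fibonacci_weight m) p = fibonacci_binomial_sum (\<lambda>q. (M ^^ Suc q) b p) m"
    unfolding fibonacci_weight_def fibonacci_binomial_sum_def by (simp add: kernel_apply_sum)
  then show ?thesis
    by (simp add: fibonacci_weight_def fibonacci_binomial_sum_Suc_Suc)
qed

lemma sum_fibonacci_weight_shift:
  "(\<Sum>r<K. c r * fibonacci_weight (K - r) p) =
    (\<Sum>r<K. c r * fibonacci_weight (K - 1 - r) p) +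
    (\<Sum>r<K - 1. c r * M (fibonacci_weight (K - 2 - r)) p)"
proof (cases K)
  case 0
  then show ?thesis by simp
next
  case (Suc K')
  have "fibonacci_weight (Suc K' - r) p =
      fibonacci_weight (K' - r) p + M (fibonacci_weight (K' - 1 - r)) p"
    if "r < K'" for r
    using that fibonacci_weight_Suc_Suc[of "K' - 1 - r" p] by (simp add: Suc_diff_le Suc_diff_Suc)
  then show ?thesis
    using Suc by (simp add: fibonacci_weight_0 fibonacci_weight_1 sum.distrib distrib_left)
qed

lemma sum_ones_after_fibonacci_weight:
  "(\<Sum>p\<in>T0. b p * fibonacci_weight m p) = (\<Sum>q\<le>m. ((m - q) choose q) * Fnum n a (Suc q))"
  by (simp add: fibonacci_weight_def fibonacci_binomial_sum_def Fnum_Suc sum_distrib_left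
    sum.swap[of _ T0] mult_ac)

end

locale threshold_walk_counts = threshold_sequence +
  fixes w :: "nat \<Rightarrow> nat \<Rightarrow> nat"
  assumes w_0: "j \<in> {1..n} \<Longrightarrow> w 0 j = 0"
    and w_1: "j \<in> {1..n} \<Longrightarrow> w (Suc 0) j = (if a j then 1 else 0)"
    and w_Suc_Suc: "j \<in> {1..n} \<Longrightarrow>
      w (Suc (Suc m)) j = (\<Sum>i | i \<in> {1..n} \<and> (i = j \<or> a (max i j)). w (Suc m) i)"
begin

definition lw :: "nat \<Rightarrow> nat" where
  "lw k = (if k = 0 then 1 else (\<Sum>j\<in>T1. w k j))"

lemma w_Suc_type1:
  assumes "j \<in> T1"
  shows "w (Suc k) j = lw k + (\<Sum>p | p \<in> T0 \<and> p < j. w k p)"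
proof (cases k)
  case 0
  then show ?thesis
    using assms by (simp add: lw_def w_1 w_0 type1_positions_def type0_positions_def)
next
  case (Suc m)
  have "{i. i \<in> {1..n} \<and> (i = j \<or> a (max i j))} = T1 \<union> {p. p \<in> T0 \<and> p < j}"
    using assms by (auto simp: type1_positions_def type0_positions_def max_def less_le)
  moreover have "T1 \<inter> {p. p \<in> T0 \<and> p < j} = {}"
    by (auto simp: type1_positions_def type0_positions_def)
  ultimately show ?thesis
    using assms Suc by (simp add: w_Suc_Suc type1_positions_def lw_def sum.union_disjoint)
qed

lemma w_Suc_type0:
  assumes "p \<in> T0"
  shows "w (Suc k) p = w k p + (\<Sum>j | j \<in> T1 \<and> p < j. w k j)"
proof (cases k)
  case 0
  then show ?thesis
    using assms by (simp add: w_1 w_0 type1_positions_def type0_positions_def)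
next
  case (Suc m)
  have "{i. i \<in> {1..n} \<and> (i = p \<or> a (max i p))} = insert p {j. j \<in> T1 \<and> p < j}"
    using assms by (auto simp: type1_positions_def type0_positions_def max_def)
  then show ?thesis
    using assms Suc by (simp add: w_Suc_Suc type0_positions_def)
qed

lemma lw_Suc: "lw (Suc k) = card T1 * lw k + (\<Sum>p\<in>T0. b p * w k p)"
proof -
  have "lw (Suc k) = (\<Sum>j\<in>T1. lw k + (\<Sum>p | p \<in> T0 \<and> p < j. w k p))"
    by (simp add: lw_def w_Suc_type1)
  also have "\<dots> = card T1 * lw k + (\<Sum>p\<in>T0. b p * w k p)"
    by (simp add: sum.distrib sum_sum_restrict_swap ones_after_def)
  finally show ?thesis .
qed

lemma w_Suc_Suc_type0:
  assumes "p \<in> T0"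
  shows "w (Suc (Suc k)) p = w (Suc k) p + b p * lw k + M (w k) p"
proof -
  have "(\<Sum>j | j \<in> T1 \<and> p < j. w (Suc k) j) =
      (\<Sum>j | j \<in> T1 \<and> p < j. lw k + (\<Sum>p' | p' \<in> T0 \<and> p' < j. w k p'))"
    by (intro sum.cong refl) (simp add: w_Suc_type1)
  also have "\<dots> = b p * lw k + (\<Sum>j | j \<in> T1 \<and> p < j. \<Sum>p' | p' \<in> T0 \<and> p' < j. w k p')"
    by (simp add: sum.distrib ones_after_def)
  also have "(\<Sum>j | j \<in> T1 \<and> p < j. \<Sum>p' | p' \<in> T0 \<and> p' < j. w k p') =
      (\<Sum>p'\<in>T0. card {j. j \<in> T1 \<and> p < j \<and> p' < j} * w k p')"
    by (simp add: sum_sum_restrict_swap conj_assoc)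
  also have "\<dots> = M (w k) p"
    by (simp add: kernel_apply_def card_ones_after_both)
  finally show ?thesis
    using assms by (simp add: w_Suc_type0)
qed

lemma w_type0_conv_lw:
  "p \<in> T0 \<Longrightarrow> w k p = (\<Sum>r<k - 1. lw r * fibonacci_weight (k - 2 - r) p)"
proof (induction k arbitrary: p rule: induct_nat_012)
  case 0
  then show ?case by (simp add: w_0 type0_positions_def)
next
  case 1
  then show ?case by (simp add: w_1 type0_positions_def)
next
  case (ge2 K)
  have "M (w K) p = M (\<lambda>p'. \<Sum>r<K - 1. lw r * fibonacci_weight (K - 2 - r) p') p"
    using ge2.IH(1) by (rule kernel_apply_cong)
  also have "\<dots> = (\<Sum>r<K - 1. lw r * M (fibonacci_weight (K - 2 - r)) p)"
    by (rule kernel_apply_sum)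
  finally have "w (Suc (Suc K)) p = (\<Sum>r<K. lw r * fibonacci_weight (K - 1 - r) p) + b p * lw K +
      (\<Sum>r<K - 1. lw r * M (fibonacci_weight (K - 2 - r)) p)"
    using ge2 by (simp add: w_Suc_Suc_type0)
  also have "\<dots> = (\<Sum>r<Suc K. lw r * fibonacci_weight (K - r) p)"
    by (simp add: sum_fibonacci_weight_shift fibonacci_weight_0)
  finally show ?case
    by simp
qed

lemma lw_Suc_recurrence:
  "lw (Suc k) = card T1 * lw k +
    (\<Sum>r<k - 1. lw r * (\<Sum>q\<le>k - 2 - r. ((k - 2 - r - q) choose q) * Fnum n a (Suc q)))"
proof -
  have "(\<Sum>p\<in>T0. b p * w k p) = (\<Sum>p\<in>T0. \<Sum>r<k - 1. lw r * (b p * fibonacci_weight (k - 2 - r) p))"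
    by (intro sum.cong refl) (simp add: w_type0_conv_lw sum_distrib_left mult_ac)
  also have "\<dots> = (\<Sum>r<k - 1. lw r * (\<Sum>p\<in>T0. b p * fibonacci_weight (k - 2 - r) p))"
    by (simp add: sum.swap[of _ T0] sum_distrib_left)
  also have "\<dots> = (\<Sum>r<k - 1. lw r * (\<Sum>q\<le>k - 2 - r. ((k - 2 - r - q) choose q) * Fnum n a (Suc q)))"
    by (simp only: sum_ones_after_fibonacci_weight)
  finally show ?thesis
    by (simp add: lw_Suc)
qed

end

locale threshold_graph =
  fixes V :: "'a set" and E :: "'a \<Rightarrow> 'a \<Rightarrow> bool" and n :: nat
    and v :: "nat \<Rightarrow> 'a" and a :: "nat \<Rightarrow> bool"
  assumes simple: "simple_graph V E"
    and threshold: "threshold_order V E n v a"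
begin

lemma bij_v: "bij_betw v {1..n} V"
  using threshold by (simp add: threshold_order_def)

lemma inj_v: "inj_on v {1..n}"
  using bij_v by (simp add: bij_betw_def)

lemma v_in_V: "j \<in> {1..n} \<Longrightarrow> v j \<in> V"
  using bij_v by (auto simp: bij_betw_def)

lemma finite_V: "finite V"
  using simple by (simp add: simple_graph_def)

lemma type1_v_iff: "j \<in> {1..n} \<Longrightarrow> type1 n v a (v j) \<longleftrightarrow> a j"
  using bij_v by (auto simp: type1_def bij_betw_def inj_on_eq_iff)

lemma closed_adjacency:
  assumes "i \<in> {1..n}" "j \<in> {1..n}"
  shows "(v i = v j \<or> E (v i) (v j)) \<longleftrightarrow> (i = j \<or> a (max i j))"
proof -
  have adj: "E (v i) (v j) \<longleftrightarrow> a i" if "i \<in> {1..n}" "j \<in> {1..n}" "j < i" for i j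
    using threshold that by (simp add: threshold_order_def)
  have sym: "E x y \<longleftrightarrow> E y x" for x y
    using simple by (auto simp: simple_graph_def)
  have "v i = v j \<longleftrightarrow> i = j"
    using bij_v assms by (auto simp: bij_betw_def inj_on_eq_iff)
  then show ?thesis
    using adj[OF assms] adj[OF assms(2,1)] sym[of "v i" "v j"]
    by (cases i j rule: linorder_cases) (auto simp: max_def)
qed

lemma closed_neighbourhood:
  assumes "j \<in> {1..n}"
  shows "{x \<in> V. x = v j \<or> E x (v j)} = v ` {i. i \<in> {1..n} \<and> (i = j \<or> a (max i j))}"
proof (intro set_eqI iffI)
  fix x assume x: "x \<in> {x \<in> V. x = v j \<or> E x (v j)}"
  then obtain i where "i \<in> {1..n}" "x = v i"
    using bij_v by (auto simp: bij_betw_def)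
  with x show "x \<in> v ` {i. i \<in> {1..n} \<and> (i = j \<or> a (max i j))}"
    using closed_adjacency[OF _ assms] by auto
next
  fix x assume "x \<in> v ` {i. i \<in> {1..n} \<and> (i = j \<or> a (max i j))}"
  then obtain i where "i \<in> {1..n}" "i = j \<or> a (max i j)" "x = v i"
    by auto
  then show "x \<in> {x \<in> V. x = v j \<or> E x (v j)}"
    using closed_adjacency[OF _ assms] bij_v by (auto simp: bij_betw_def)
qed

definition walk_count :: "nat \<Rightarrow> nat \<Rightarrow> nat" where
  "walk_count k j = card (lazy_walks_ending_at V E (type1 n v a) k (v j))"

sublocale threshold_walk_counts n a walk_count
proof unfold_locales
  show "walk_count 0 j = 0" for j
    by (simp add: walk_count_def)
  show "walk_count (Suc 0) j = (if a j then 1 else 0)" if j: "j \<in> {1..n}" for j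
    using v_in_V[OF j] by (simp add: walk_count_def lazy_walks_ending_at_1 type1_v_iff[OF j])
  show "walk_count (Suc (Suc m)) j = (\<Sum>i | i \<in> {1..n} \<and> (i = j \<or> a (max i j)). walk_count (Suc m) i)"
    if j: "j \<in> {1..n}" for j m
  proof -
    have "inj_on v {i. i \<in> {1..n} \<and> (i = j \<or> a (max i j))}"
      by (rule inj_on_subset[OF inj_v]) auto
    moreover have "walk_count (Suc (Suc m)) j =
        (\<Sum>x\<in>v ` {i. i \<in> {1..n} \<and> (i = j \<or> a (max i j))}.
          card (lazy_walks_ending_at V E (type1 n v a) (Suc m) x))"
      unfolding walk_count_def closed_neighbourhood[OF j, symmetric]
      by (rule card_lazy_walks_ending_at_Suc_Suc[OF finite_V v_in_V[OF j]])
    ultimately show ?thesis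
      by (simp add: sum.reindex walk_count_def)
  qed
qed

lemma LW_eq_lw: "LW V E n v a k = lw k"
proof (cases "k = 0")
  case True
  then show ?thesis by (simp add: LW_def lw_def)
next
  case False
  have "{y \<in> V. type1 n v a y} = v ` T1"
    using bij_v type1_v_iff by (auto simp: bij_betw_def type1_positions_def)
  moreover have "inj_on v T1"
    by (rule inj_on_subset[OF inj_v]) (auto simp: type1_positions_def)
  ultimately show ?thesis
    using False by (simp add: LW_def lw_def card_lazy_walks_11 finite_V walk_count_def sum.reindex)
qed

end

theorem proposition3p5:
  fixes V :: "'a set" and E :: "'a \<Rightarrow> 'a \<Rightarrow> bool" and n :: nat
    and v :: "nat \<Rightarrow> 'a" and a :: "nat \<Rightarrow> bool"
  assumes "simple_graph V E"
    and "threshold_order V E n v a"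
    and "graph_connected V E"
    and "n \<ge> 4"
    and "n - 1 < graph_size E" and "graph_size E < n choose 2"
  shows "LW V E n v a 0 = 1 \<and>
    (\<forall>k\<ge>1. LW V E n v a k =
       num_type1 n a * LW V E n v a (k - 1) +
       (\<Sum>r<k - 2. LW V E n v a r *
          (\<Sum>q\<le>k - 3 - r. ((k - 3 - r - q) choose q) * Fnum n a (q + 1))))"
proof -
  interpret threshold_graph V E n v a
    using assms(1,2) by unfold_locales
  show ?thesis
  proof (intro conjI allI impI)
    show "LW V E n v a 0 = 1"
      by (simp add: LW_def)
  next
    fix k :: nat assume "k \<ge> 1"
    then obtain K where "k = Suc K"
      by (cases k) auto
    then show "LW V E n v a k = num_type1 n a * LW V E n v a (k - 1) +
       (\<Sum>r<k - 2. LW V E n v a r *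
          (\<Sum>q\<le>k - 3 - r. ((k - 3 - r - q) choose q) * Fnum n a (q + 1)))"
      by (simp add: LW_eq_lw lw_Suc_recurrence card_type1_positions)
  qed
qed

end
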